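(* Let $(a_n)_{n\in\mathbb{N}}$ be uniformly distributed in $[0,1]$, let $p\in(0,1)$, and let $(\xi_n)_{n\in\mathbb{N}}$ be i.i.d. random variables with values in $\{0,1\}$ and $\mathbb{P}(\xi_1=1)=p$. Let $m_1<m_2<\cdots$ enumerate $\{m:\xi_m=1\}$. Then, almost surely, the subsequence $(a_{m_i})_{i\in\mathbb{N}}$ is uniformly distributed in $[0,1]$.
   Context: A sequence $(a_n)$ in $[0,1]$ is uniformly distributed if $\lim_{n\to\infty}\frac1n\sum_{m=1}^n\mathbf 1_{[\alpha,\beta]}(a_m)=\beta-\alpha$ for all $0\leqslant\alpha<\beta\leqslant1$. *)

theory Defs
  imports "HOL-Probability.Probability"
begin

text \<open>Uniform distribution of a sequence in [0,1] (indices start at 0 here;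
  the definition is invariant under shifting the index).\<close>
definition uniformly_distributed :: "(nat \<Rightarrow> real) \<Rightarrow> bool" where
  "uniformly_distributed a \<longleftrightarrow>
     (\<forall>n. a n \<in> {0..1}) \<and>
     (\<forall>\<alpha> \<beta>. 0 \<le> \<alpha> \<and> \<alpha> < \<beta> \<and> \<beta> \<le> 1 \<longrightarrow>
        ((\<lambda>n. (1 / real n) * (\<Sum>m<n. indicator {\<alpha>..\<beta>} (a m))) \<longlonglongrightarrow> \<beta> - \<alpha>))"

end

theory Submission
  imports Defs
begin

(* Selecting the terms with \<xi>_n = 1 amounts to weighting the n-th term by \<xi>_n.  For a fixed
   bounded weight sequence c, the averages of \<xi>_n c_n - p c_n tend to 0 almost surely, by the
   strong law of large numbers for bounded independent variables (Hoeffding's inequality plus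
   Borel-Cantelli).  Applied to c = 1 and to the indicators of the countably many rational
   intervals, this shows that almost surely the selected set has density p and each rational
   interval is visited by the selected terms with frequency p times its length.  Dividing by
   the density gives the frequencies along the subsequence, and monotonicity of frequencies in
   the interval extends them from rational to arbitrary intervals. *)

lemma sum_lessThan_enumerate:
  fixes f :: "nat \<Rightarrow> 'a::comm_monoid_add"
  assumes "infinite E"
  shows "(\<Sum>m<enumerate E N. if m \<in> E then f m else 0) = (\<Sum>i<N. f (enumerate E i))"
proof -
  have "{..<enumerate E N} \<inter> E = enumerate E ` {..<N}"
  proof (intro equalityI subsetI)
    fix m assume m: "m \<in> {..<enumerate E N} \<inter> E"
    then obtain j where "enumerate E j = m" using enumerate_Ex[OF assms] by blast
    with m show "m \<in> enumerate E ` {..<N}" using assms by auto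
  qed (use assms enumerate_in_set in auto)
  then have "(\<Sum>m<enumerate E N. if m \<in> E then f m else 0) = (\<Sum>m\<in>enumerate E ` {..<N}. f m)"
    by (simp flip: sum.inter_restrict)
  also have "\<dots> = (\<Sum>i<N. f (enumerate E i))"
    using inj_enumerate[OF assms] by (simp add: sum.reindex inj_on_subset)
  finally show ?thesis .
qed

definition frequency :: "(nat \<Rightarrow> real) \<Rightarrow> real set \<Rightarrow> nat \<Rightarrow> real" where
  "frequency b I n = (1 / real n) * (\<Sum>m<n. indicator I (b m))"

lemma frequency_mono: "I \<subseteq> J \<Longrightarrow> frequency b I n \<le> frequency b J n"
  unfolding frequency_def by (intro mult_left_mono sum_mono) (auto simp: indicator_def)

lemma uniformly_distributed_iff_frequency:
  "uniformly_distributed a \<longleftrightarrow> (\<forall>n. a n \<in> {0..1}) \<and>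
     (\<forall>\<alpha> \<beta>. 0 \<le> \<alpha> \<and> \<alpha> < \<beta> \<and> \<beta> \<le> 1 \<longrightarrow> frequency a {\<alpha>..\<beta>} \<longlonglongrightarrow> \<beta> - \<alpha>)"
  unfolding uniformly_distributed_def frequency_def ..

lemma frequency_tendsto_of_rational_intervals:
  assumes rational: "\<And>x y. x \<in> \<rat> \<Longrightarrow> y \<in> \<rat> \<Longrightarrow> 0 \<le> x \<Longrightarrow> x < y \<Longrightarrow> y \<le> 1 \<Longrightarrow>
      frequency b {x..y} \<longlonglongrightarrow> y - x"
    and "0 \<le> \<alpha>" "\<alpha> < \<beta>" "\<beta> \<le> 1"
  shows "frequency b {\<alpha>..\<beta>} \<longlonglongrightarrow> \<beta> - \<alpha>"
proof (rule LIMSEQ_I)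
  fix r :: real assume "0 < r"
  define \<epsilon> where "\<epsilon> = min (r / 3) ((\<beta> - \<alpha>) / 3)"
  have \<epsilon>: "0 < \<epsilon>" "\<epsilon> < r / 2" "2 * \<epsilon> < \<beta> - \<alpha>"
    using \<open>0 < r\<close> \<open>\<alpha> < \<beta>\<close> by (auto simp: \<epsilon>_def min_def)
  obtain q1 where q1: "q1 \<in> \<rat>" "\<alpha> - \<epsilon> < q1" "q1 < \<alpha>"
    using Rats_dense_in_real[of "\<alpha> - \<epsilon>" \<alpha>] \<epsilon> by auto
  obtain q2 where q2: "q2 \<in> \<rat>" "\<beta> < q2" "q2 < \<beta> + \<epsilon>"
    using Rats_dense_in_real[of \<beta> "\<beta> + \<epsilon>"] \<epsilon> by auto
  define x1 where "x1 = max 0 q1"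
  define y1 where "y1 = min 1 q2"
  have outer: "x1 \<in> \<rat>" "y1 \<in> \<rat>" "0 \<le> x1" "x1 \<le> \<alpha>" "\<alpha> - \<epsilon> < x1"
      "y1 \<le> 1" "\<beta> \<le> y1" "y1 < \<beta> + \<epsilon>"
    using q1 q2 assms(2-4) \<epsilon> by (auto simp: x1_def y1_def max_def min_def)
  obtain x2 where x2: "x2 \<in> \<rat>" "\<alpha> < x2" "x2 < \<alpha> + \<epsilon>"
    using Rats_dense_in_real[of \<alpha> "\<alpha> + \<epsilon>"] \<epsilon> by auto
  obtain y2 where y2: "y2 \<in> \<rat>" "\<beta> - \<epsilon> < y2" "y2 < \<beta>"
    using Rats_dense_in_real[of "\<beta> - \<epsilon>" \<beta>] \<epsilon> by auto
  note inner = x2 y2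
  have "eventually (\<lambda>n. frequency b {x1..y1} n < \<beta> - \<alpha> + 2 * \<epsilon>) sequentially"
    by (rule order_tendstoD(2)[OF rational[of x1 y1]]) (use outer assms in auto)
  moreover have "eventually (\<lambda>n. \<beta> - \<alpha> - 2 * \<epsilon> < frequency b {x2..y2} n) sequentially"
    by (rule order_tendstoD(1)[OF rational[of x2 y2]]) (use inner assms \<epsilon> in auto)
  ultimately have "eventually (\<lambda>n. norm (frequency b {\<alpha>..\<beta>} n - (\<beta> - \<alpha>)) < r) sequentially"
  proof eventually_elim
    case (elim n)
    have "frequency b {x2..y2} n \<le> frequency b {\<alpha>..\<beta>} n"
      and "frequency b {\<alpha>..\<beta>} n \<le> frequency b {x1..y1} n"
      using inner outer by (auto intro!: frequency_mono)
    with elim \<epsilon> show ?case by (simp add: abs_less_iff)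
  qed
  then show "\<exists>n0. \<forall>n\<ge>n0. norm (frequency b {\<alpha>..\<beta>} n - (\<beta> - \<alpha>)) < r"
    by (simp add: eventually_sequentially)
qed

lemma tendsto_selected_average:
  fixes E :: "nat set" and c :: "nat \<Rightarrow> real"
  assumes "(\<lambda>n. (\<Sum>i<n. (if i \<in> E then c i else 0) - p * c i) / real n) \<longlonglongrightarrow> 0"
    and "(\<lambda>n. (\<Sum>i<n. c i) / real n) \<longlonglongrightarrow> L"
  shows "(\<lambda>n. (\<Sum>i<n. if i \<in> E then c i else 0) / real n) \<longlonglongrightarrow> p * L"
proof -
  have "(\<Sum>i<n. if i \<in> E then c i else 0) / real n =
      (\<Sum>i<n. (if i \<in> E then c i else 0) - p * c i) / real n + p * ((\<Sum>i<n. c i) / real n)" for n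
    by (simp add: sum_subtractf sum_distrib_left diff_divide_distrib)
  with tendsto_add[OF assms(1) tendsto_mult_left[OF assms(2)]] show ?thesis by simp
qed

lemma infinite_if_density_nonzero:
  fixes E :: "nat set"
  assumes "(\<lambda>n. (\<Sum>i<n. if i \<in> E then 1 else 0) / real n) \<longlonglongrightarrow> p" and "p \<noteq> 0"
  shows "infinite E"
proof
  assume "finite E"
  then obtain N where N: "E \<subseteq> {..<N}" using finite_nat_bounded by blast
  have "eventually (\<lambda>n. real (card E) / real n = (\<Sum>i<n. if i \<in> E then 1 else 0) / real n) sequentially"
    using eventually_ge_at_top[of N]
  proof eventually_elim
    case (elim n)
    with N have "{..<n} \<inter> E = E" by auto
    then show ?case by (simp add: sum.If_cases)
  qed
  with lim_const_over_n[of "real (card E)"]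
  have "(\<lambda>n. (\<Sum>i<n. if i \<in> E then 1 else 0) / real n) \<longlonglongrightarrow> 0"
    by (rule Lim_transform_eventually)
  with assms show False using LIMSEQ_unique by blast
qed

lemma tendsto_average_enumerate:
  fixes E :: "nat set" and c :: "nat \<Rightarrow> real"
  assumes density: "(\<lambda>n. (\<Sum>i<n. if i \<in> E then 1 else 0) / real n) \<longlonglongrightarrow> p" and "p \<noteq> 0"
    and selected: "(\<lambda>n. (\<Sum>i<n. if i \<in> E then c i else 0) / real n) \<longlonglongrightarrow> p * L"
  shows "(\<lambda>N. (\<Sum>i<N. c (enumerate E i)) / real N) \<longlonglongrightarrow> L"
proof -
  define T where "T n = (\<Sum>i<n. if i \<in> E then c i else 0)" for n
  define C where "C n = (\<Sum>i<n. if i \<in> E then 1 else 0::real)" for n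
  have E: "infinite E" by (rule infinite_if_density_nonzero[OF density \<open>p \<noteq> 0\<close>])
  have "(\<lambda>n. (T n / real n) / (C n / real n)) \<longlonglongrightarrow> (p * L) / p"
    using selected density \<open>p \<noteq> 0\<close> unfolding T_def C_def by (intro tendsto_divide) auto
  moreover have "eventually (\<lambda>n. (T n / real n) / (C n / real n) = T n / C n) sequentially"
    using eventually_gt_at_top[of "0::nat"] by eventually_elim simp
  ultimately have "(\<lambda>n. T n / C n) \<longlonglongrightarrow> L"
    using \<open>p \<noteq> 0\<close> by (simp add: Lim_transform_eventually)
  from LIMSEQ_subseq_LIMSEQ[OF this strict_mono_enumerate[OF E]]
  have "(\<lambda>N. T (enumerate E N) / C (enumerate E N)) \<longlonglongrightarrow> L" by (simp add: comp_def)
  moreover have "T (enumerate E N) = (\<Sum>i<N. c (enumerate E i))" for N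
    unfolding T_def by (rule sum_lessThan_enumerate[OF E])
  moreover have "C (enumerate E N) = real N" for N
    unfolding C_def using sum_lessThan_enumerate[OF E, of "\<lambda>_. 1::real" N] by simp
  ultimately show ?thesis by simp
qed

lemma uniformly_distributed_enumerate:
  fixes E :: "nat set" and a :: "nat \<Rightarrow> real"
  assumes "uniformly_distributed a" and "0 < p"
    and density: "(\<lambda>n. (\<Sum>i<n. (if i \<in> E then 1 else 0) - p) / real n) \<longlonglongrightarrow> 0"
    and intervals: "\<And>x y. x \<in> \<rat> \<Longrightarrow> y \<in> \<rat> \<Longrightarrow>
      (\<lambda>n. (\<Sum>i<n. (if i \<in> E then indicator {x..y} (a i) else 0) - p * indicator {x..y} (a i))
        / real n) \<longlonglongrightarrow> 0"
  shows "infinite E \<and> uniformly_distributed (\<lambda>i. a (enumerate E i))"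
proof -
  have "(\<lambda>n. (\<Sum>i<n. 1) / real n :: real) \<longlonglongrightarrow> 1"
    by (rule Lim_transform_eventually[OF tendsto_const])
      (use eventually_gt_at_top[of "0::nat"] in \<open>eventually_elim, simp\<close>)
  with density have E_density: "(\<lambda>n. (\<Sum>i<n. if i \<in> E then 1 else 0) / real n) \<longlonglongrightarrow> p"
    using tendsto_selected_average[of E "\<lambda>_. 1" p 1] by simp
  have "frequency (\<lambda>i. a (enumerate E i)) {x..y} \<longlonglongrightarrow> y - x"
    if "x \<in> \<rat>" "y \<in> \<rat>" "0 \<le> x" "x < y" "y \<le> 1" for x y
  proof -
    have "(\<lambda>n. (\<Sum>i<n. indicator {x..y} (a i)) / real n) \<longlonglongrightarrow> y - x"
      using assms(1) that unfolding uniformly_distributed_iff_frequency frequency_def by simp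
    from tendsto_selected_average[OF intervals[OF that(1,2)] this]
    show ?thesis
      unfolding frequency_def using tendsto_average_enumerate[OF E_density] \<open>0 < p\<close> by simp
  qed
  then show ?thesis
    using assms(1) infinite_if_density_nonzero[OF E_density] \<open>0 < p\<close>
    by (auto simp: uniformly_distributed_iff_frequency
        intro: frequency_tendsto_of_rational_intervals)
qed

lemma (in prob_space) prob_sum_deviation_ge:
  fixes X :: "nat \<Rightarrow> 'a \<Rightarrow> real"
  assumes indep: "indep_vars (\<lambda>_. borel) X UNIV"
    and bounded: "\<And>i x. x \<in> space M \<Longrightarrow> \<bar>X i x\<bar> \<le> B" and "0 < B" and "0 \<le> e"
  shows "prob {x \<in> space M. real n * e \<le> \<bar>(\<Sum>i<n. X i x) - (\<Sum>i<n. expectation (X i))\<bar>}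
    \<le> 2 * exp (- e\<^sup>2 / (2 * B\<^sup>2)) ^ n"
proof (cases "n = 0")
  case True
  then show ?thesis by (simp add: prob_space)
next
  case False
  interpret Hoeffding_ineq M "{..<n}" X "\<lambda>_. - B" "\<lambda>_. B" "\<Sum>i<n. expectation (X i)"
  proof unfold_locales
    show "indep_vars (\<lambda>_. borel) X {..<n}" by (rule indep_vars_subset[OF indep]) simp
    show "AE x in M. X i x \<in> {- B..B}" for i
      using bounded[of _ i] by (intro AE_I2) (fastforce simp: abs_le_iff)
  qed simp
  have "prob {x \<in> space M. real n * e \<le> \<bar>(\<Sum>i<n. X i x) - (\<Sum>i<n. expectation (X i))\<bar>}
      \<le> 2 * exp (-2 * (real n * e)\<^sup>2 / (\<Sum>i<n. (B - - B)\<^sup>2))"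
    by (rule Hoeffding_ineq_abs_ge) (use \<open>0 < B\<close> \<open>0 \<le> e\<close> False in simp_all)
  also have "-2 * (real n * e)\<^sup>2 / (\<Sum>i<n. (B - - B)\<^sup>2) = real n * (- e\<^sup>2 / (2 * B\<^sup>2))"
    using False \<open>0 < B\<close> by (simp add: power2_eq_square field_simps)
  also have "exp (real n * (- e\<^sup>2 / (2 * B\<^sup>2))) = exp (- e\<^sup>2 / (2 * B\<^sup>2)) ^ n"
    by (rule exp_of_nat_mult)
  finally show ?thesis .
qed

lemma LIMSEQ_zero_if_eventually_less_inverse_Suc:
  fixes f :: "nat \<Rightarrow> real"
  assumes "\<And>k. eventually (\<lambda>n. \<bar>f n\<bar> < 1 / real (Suc k)) sequentially"
  shows "f \<longlonglongrightarrow> 0"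
proof (rule LIMSEQ_I)
  fix r :: real assume "0 < r"
  then obtain k where "inverse (real (Suc k)) < r" using reals_Archimedean by blast
  with assms[of k] have "eventually (\<lambda>n. norm (f n - 0) < r) sequentially"
    by (auto elim: eventually_mono simp: inverse_eq_divide)
  then show "\<exists>n0. \<forall>n\<ge>n0. norm (f n - 0) < r" by (simp add: eventually_sequentially)
qed

lemma (in prob_space) strong_law_of_large_numbers_bounded:
  fixes X :: "nat \<Rightarrow> 'a \<Rightarrow> real"
  assumes indep: "indep_vars (\<lambda>_. borel) X UNIV"
    and bounded: "\<And>i x. x \<in> space M \<Longrightarrow> \<bar>X i x\<bar> \<le> B"
  shows "AE x in M. (\<lambda>n. (\<Sum>i<n. X i x - expectation (X i)) / real n) \<longlonglongrightarrow> 0"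
proof -
  have [measurable]: "X i \<in> borel_measurable M" for i
    using indep unfolding indep_vars_def by auto
  define B' where "B' = max B 1"
  have B': "0 < B'" "\<And>i x. x \<in> space M \<Longrightarrow> \<bar>X i x\<bar> \<le> B'"
    using bounded by (auto simp: B'_def intro: max.coboundedI1)
  define A where "A k n = {x \<in> space M. real n * (1 / real (Suc k)) \<le>
    \<bar>(\<Sum>i<n. X i x) - (\<Sum>i<n. expectation (X i))\<bar>}" for k n
  have "AE x in M. eventually (\<lambda>n. x \<in> space M - A k n) sequentially" for k
  proof (rule borel_cantelli_AE1)
    show "A k n \<in> sets M" for n unfolding A_def by measurable
    show "emeasure M (A k n) < \<infinity>" for n by (simp add: less_top[symmetric])
    define q where "q = exp (- (1 / real (Suc k))\<^sup>2 / (2 * B'\<^sup>2))"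
    have "summable (\<lambda>n. 2 * q ^ n)"
      using \<open>0 < B'\<close> by (intro summable_mult summable_geometric) (simp add: q_def)
    moreover have "norm (measure M (A k n)) \<le> 2 * q ^ n" for n
      using prob_sum_deviation_ge[OF indep B'(2) B'(1), of "1 / real (Suc k)" n]
      unfolding A_def q_def by simp
    ultimately show "summable (\<lambda>n. measure M (A k n))" by (rule summable_comparison_test')
  qed
  then have "AE x in M. \<forall>k. eventually (\<lambda>n. x \<in> space M - A k n) sequentially"
    by (simp add: AE_all_countable)
  then show ?thesis
  proof (rule AE_mp[OF _ AE_I2], intro impI LIMSEQ_zero_if_eventually_less_inverse_Suc)
    fix x k assume "x \<in> space M" and "\<forall>k. eventually (\<lambda>n. x \<in> space M - A k n) sequentially"
    then have "eventually (\<lambda>n. x \<in> space M - A k n) sequentially" by blast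
    then show "eventually (\<lambda>n. \<bar>(\<Sum>i<n. X i x - expectation (X i)) / real n\<bar> < 1 / real (Suc k))
        sequentially"
      using eventually_gt_at_top[of "0::nat"]
    proof eventually_elim
      case (elim n)
      then show ?case
        using \<open>x \<in> space M\<close> by (simp add: A_def sum_subtractf divide_simps not_le)
    qed
  qed
qed

lemma (in prob_space) AE_selected_discrepancy_tendsto_zero:
  fixes \<xi> :: "nat \<Rightarrow> 'a \<Rightarrow> 'b" and c :: "nat \<Rightarrow> real"
  assumes indep: "indep_vars (\<lambda>_. count_space UNIV) \<xi> UNIV"
    and prob: "\<And>i. prob {\<omega> \<in> space M. \<xi> i \<omega> = y} = p"
    and bounded: "\<And>i. \<bar>c i\<bar> \<le> B"
  shows "AE \<omega> in M. (\<lambda>n. (\<Sum>i<n. (if \<xi> i \<omega> = y then c i else 0) - p * c i) / real n) \<longlonglongrightarrow> 0"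
proof -
  define X where "X i \<omega> = (if \<xi> i \<omega> = y then c i else 0)" for i \<omega>
  have [measurable]: "\<xi> i \<in> measurable M (count_space UNIV)" for i
    using indep unfolding indep_vars_def by auto
  have "indep_vars (\<lambda>_. borel) X UNIV"
    unfolding X_def by (rule indep_vars_compose2[OF indep]) simp
  moreover have "\<bar>X i \<omega>\<bar> \<le> B" for i \<omega>
    using bounded[of i] by (auto simp: X_def)
  moreover have "expectation (X i) = p * c i" for i
  proof -
    have "expectation (X i) = expectation (\<lambda>\<omega>. c i * indicator {\<omega> \<in> space M. \<xi> i \<omega> = y} \<omega>)"
      by (intro Bochner_Integration.integral_cong) (auto simp: X_def)
    then show ?thesis using prob[of i] by (simp add: Int_absorb2)
  qed
  ultimately show ?thesis
    using strong_law_of_large_numbers_bounded[of X B] by (simp add: X_def)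
qed

theorem theoremA1:
  fixes M :: "'w measure" and a :: "nat \<Rightarrow> real" and p :: real
    and \<xi> :: "nat \<Rightarrow> 'w \<Rightarrow> nat"
  assumes "prob_space M"
    and "uniformly_distributed a"
    and "0 < p" and "p < 1"
    and "\<And>n. \<xi> n \<in> measurable M (count_space UNIV)"
    and "\<And>n \<omega>. \<omega> \<in> space M \<Longrightarrow> \<xi> n \<omega> \<in> {0, 1}"
    and "prob_space.indep_vars M (\<lambda>_. count_space UNIV) \<xi> UNIV"
    and "\<And>n. distr M (count_space UNIV) (\<xi> n) = distr M (count_space UNIV) (\<xi> 0)"
    and "measure M {\<omega> \<in> space M. \<xi> 0 \<omega> = 1} = p"
  shows "AE \<omega> in M. infinite {m. \<xi> m \<omega> = 1} \<and>
           uniformly_distributed (\<lambda>i. a (enumerate {m. \<xi> m \<omega> = 1} i))"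
proof -
  interpret prob_space M by fact
  have "prob {\<omega> \<in> space M. \<xi> i \<omega> = 1} = measure (distr M (count_space UNIV) (\<xi> i)) {1}" for i
    using assms(5) by (simp add: measure_distr vimage_def Int_def conj_commute)
  then have prob: "prob {\<omega> \<in> space M. \<xi> i \<omega> = 1} = p" for i
    using assms(8,9) by metis
  have selected: "AE \<omega> in M. (\<lambda>n. (\<Sum>i<n. (if \<xi> i \<omega> = 1 then c i else 0) - p * c i) / real n)
      \<longlonglongrightarrow> 0" if "\<And>i. \<bar>c i\<bar> \<le> 1" for c
    by (rule AE_selected_discrepancy_tendsto_zero[OF assms(7) prob that])
  have density: "AE \<omega> in M. (\<lambda>n. (\<Sum>i<n. (if \<xi> i \<omega> = 1 then 1 else 0) - p) / real n) \<longlonglongrightarrow> 0"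
    using selected[of "\<lambda>_. 1"] by simp
  have intervals: "AE \<omega> in M. \<forall>x\<in>\<rat>. \<forall>y\<in>\<rat>.
      (\<lambda>n. (\<Sum>i<n. (if \<xi> i \<omega> = 1 then indicator {x..y} (a i) else 0) - p * indicator {x..y} (a i))
        / real n) \<longlonglongrightarrow> 0"
    by (intro AE_ball_countable' countable_rat selected) (simp add: indicator_def)
  from density intervals show ?thesis
  proof eventually_elim
    case (elim \<omega>)
    then show ?case by (intro uniformly_distributed_enumerate[OF assms(2,3)]) simp_all
  qed
qed

end
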